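(* Let $n>24$, $s>0$, $L>9$, and $m=Ln$ (assumed to be an integer). Let $v=(v_1,\dots,v_n)$ with $v_i\ge0$ and $\sum_i v_i=1$. Then $$\mathsf P\left\{\mathrm{AST}(v,x)\le L\,n\,\|v\|\,\|p\|\sqrt{1+\frac{3+6s}{\sqrt L}+\frac{5s^2}{L}}+1\right\}\ \ge\ 1-\frac{10}{9}e^{-s^2/4}.$$
   Context: Standing setup: $U$ is a finite set (the key space) with a probability measure $q$; $T=\{1,\dots,n\}$; $h:U\to T$ is an arbitrary function. $p_i=\sum_{u\in h^{-1}(i)}q(u)$ and $\|p\|^2=\sum_{i=1}^n p_i^2$. $U^m$ carries the product measure $q^m$, and $\mathsf P$ denotes probability under $q^m$ for $x=(x_1,\dots,x_m)\in U^m$. $k_i(x)=|\{j: h(x_j)=i\}|$. $\|\cdot\|$ is the euclidean norm. The vector $v$ is a user's access pattern ($v_i$ = fraction of the user's searches directed to slot $i$). $\mathrm{AST}(v,x)$ denotes the average search time of such a user in a hash table with chaining after the keys $x$ have been inserted; in this model it satisfies $\mathrm{AST}(v,x)\le\sum_{i=1}^n v_i\,k_i(x)$ (search time in slot $i$ identified with chain length, counted with multiplicity). *)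

theory Defs
  imports "HOL-Probability.Probability"
begin

definition slot_prob :: "'u pmf \<Rightarrow> ('u \<Rightarrow> nat) \<Rightarrow> nat \<Rightarrow> real" where
  "slot_prob q h i = measure_pmf.prob q {u. h u = i}"

definition chain_len :: "('u \<Rightarrow> nat) \<Rightarrow> nat \<Rightarrow> (nat \<Rightarrow> 'u) \<Rightarrow> nat \<Rightarrow> nat" where
  "chain_len h m x i = card {j \<in> {..<m}. h (x j) = i}"

definition vnorm :: "nat \<Rightarrow> (nat \<Rightarrow> real) \<Rightarrow> real" where
  "vnorm n w = sqrt (\<Sum>i\<in>{1..n}. (w i)^2)"

definition keys_pmf :: "nat \<Rightarrow> 'u pmf \<Rightarrow> (nat \<Rightarrow> 'u) pmf" where
  "keys_pmf m q = Pi_pmf {..<m} undefined (\<lambda>_. q)"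

end

theory Submission
  imports Defs "HOL-Analysis.L2_Norm"
begin

text \<open>
  Since the search time is bounded by \<open>\<Sum>\<^sub>i v\<^sub>i k\<^sub>i(x) = \<Sum>\<^sub>j v\<^bsub>h(x\<^sub>j)\<^esub>\<close>, it suffices to
  bound a sum of \<open>m\<close> independent copies of \<open>v\<^bsub>h(u)\<^esub>\<close>, which take values in
  \<open>[0, \<parallel>v\<parallel>]\<close> and have mean \<open>\<Sum>\<^sub>i v\<^sub>i p\<^sub>i \<le> \<parallel>v\<parallel> \<parallel>p\<parallel>\<close> by Cauchy-Schwarz.
  Hoeffding's inequality with deviation \<open>\<surd>5 s \<parallel>v\<parallel> \<surd>m\<close> fails with probability at most
  \<open>exp (-10 s\<^sup>2)\<close>, and since \<open>n \<parallel>p\<parallel>\<^sup>2 \<ge> 1\<close> the deviation is at most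
  \<open>m \<parallel>v\<parallel> \<parallel>p\<parallel> \<surd>5 s / \<surd>L\<close>, which the square-root factor absorbs.
  This gives a stronger bound than claimed; the hypotheses \<open>n > 24\<close> and \<open>L > 9\<close> are
  only used in the weakened forms \<open>n > 0\<close> and \<open>L > 0\<close>.
\<close>

lemma vnorm_eq_L2_set: "vnorm n w = L2_set w {1..n}"
  by (simp add: vnorm_def L2_set_def)

lemma component_le_vnorm: "i \<in> {1..n} \<Longrightarrow> w i \<le> vnorm n w"
  unfolding vnorm_eq_L2_set by (rule member_le_L2_set) simp_all

lemma sum_mult_le_vnorm_mult: "(\<Sum>i\<in>{1..n}. w i * z i) \<le> vnorm n w * vnorm n z"
proof -
  have "(\<Sum>i\<in>{1..n}. w i * z i) \<le> (\<Sum>i\<in>{1..n}. \<bar>w i\<bar> * \<bar>z i\<bar>)"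
    by (intro sum_mono) (simp flip: abs_mult)
  also have "\<dots> \<le> vnorm n w * vnorm n z"
    unfolding vnorm_eq_L2_set by (rule L2_set_mult_ineq)
  finally show ?thesis .
qed

lemma sum_le_sqrt_card_mult_vnorm: "(\<Sum>i\<in>{1..n}. w i) \<le> sqrt (real n) * vnorm n w"
  using sum_mult_le_vnorm_mult[where n = n and w = "\<lambda>_. 1" and z = w] by (simp add: vnorm_def)

lemma expectation_comp_eq_sum_slot_prob:
  fixes f :: "nat \<Rightarrow> real"
  assumes h_range: "\<And>u. h u \<in> {1..n}"
  shows "measure_pmf.expectation q (\<lambda>u. f (h u)) = (\<Sum>i\<in>{1..n}. f i * slot_prob q h i)"
proof -
  have "measure_pmf.expectation q (\<lambda>u. f (h u)) = measure_pmf.expectation (map_pmf h q) f"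
    by simp
  also have "\<dots> = (\<Sum>i\<in>{1..n}. pmf (map_pmf h q) i * f i)"
    by (subst integral_measure_pmf[where A = "{1..n}"]) (use h_range in auto)
  also have "\<dots> = (\<Sum>i\<in>{1..n}. f i * slot_prob q h i)"
    by (simp add: pmf_map slot_prob_def vimage_def mult.commute)
  finally show ?thesis .
qed

lemma sum_slot_prob:
  assumes "\<And>u. h u \<in> {1..n}"
  shows "(\<Sum>i\<in>{1..n}. slot_prob q h i) = 1"
  using expectation_comp_eq_sum_slot_prob[of h n q "\<lambda>_. 1"] assms by simp

lemma sum_chain_len_weighted:
  assumes h_range: "\<And>u. h u \<in> {1..n}"
  shows "(\<Sum>i\<in>{1..n}. w i * real (chain_len h m x i)) = (\<Sum>j<m. w (h (x j)))"
proof -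
  have "(\<Sum>i\<in>{1..n}. w i * real (chain_len h m x i))
      = (\<Sum>i\<in>{1..n}. \<Sum>j<m. (if h (x j) = i then w i else 0))"
    by (intro sum.cong refl) (simp add: chain_len_def sum.If_cases Int_def)
  also have "\<dots> = (\<Sum>j<m. \<Sum>i\<in>{1..n}. (if h (x j) = i then w i else 0))"
    by (rule sum.swap)
  also have "\<dots> = (\<Sum>j<m. w (h (x j)))"
    by (intro sum.cong refl) (use h_range in \<open>simp add: sum.delta'\<close>)
  finally show ?thesis .
qed

lemma expectation_keys_pmf_component:
  fixes f :: "'u \<Rightarrow> real"
  assumes "j < m"
  shows "measure_pmf.expectation (keys_pmf m q) (\<lambda>x. f (x j)) = measure_pmf.expectation q f"
proof -
  have "measure_pmf.expectation (keys_pmf m q) (\<lambda>x. f (x j))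
      = measure_pmf.expectation (map_pmf (\<lambda>x. x j) (keys_pmf m q)) f"
    by simp
  also have "map_pmf (\<lambda>x. x j) (keys_pmf m q) = q"
    unfolding keys_pmf_def by (subst Pi_pmf_component) (use assms in auto)
  finally show ?thesis .
qed

lemma keys_pmf_Hoeffding_lt:
  fixes f :: "'u \<Rightarrow> real"
  assumes f_range: "\<And>u. f u \<in> {a..b}" and "a < b" and "m > 0" and "\<epsilon> \<ge> 0"
  shows "measure_pmf.prob (keys_pmf m q)
           {x. (\<Sum>j<m. f (x j)) < real m * measure_pmf.expectation q f + \<epsilon>}
         \<ge> 1 - exp (-2 * \<epsilon>\<^sup>2 / (real m * (b - a)\<^sup>2))"
proof -
  let ?M = "measure_pmf (keys_pmf m q)"
  let ?large = "{x. (\<Sum>j<m. f (x j)) \<ge> real m * measure_pmf.expectation q f + \<epsilon>}"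
  have mean: "(\<Sum>j<m. measure_pmf.expectation (keys_pmf m q) (\<lambda>x. f (x j)))
      = real m * measure_pmf.expectation q f"
    by (simp add: expectation_keys_pmf_component)
  interpret Hoeffding_ineq ?M "{..<m}" "\<lambda>j x. f (x j)" "\<lambda>_. a" "\<lambda>_. b"
    "real m * measure_pmf.expectation q f"
  proof unfold_locales
    show "prob_space.indep_vars ?M (\<lambda>_. borel) (\<lambda>j x. f (x j)) {..<m}"
      unfolding keys_pmf_def
      by (rule prob_space.indep_vars_compose2[OF measure_pmf.prob_space_axioms indep_vars_Pi_pmf])
        auto
  qed (use f_range mean in auto)
  have "(\<Sum>j<m. (b - a)\<^sup>2) > 0"
    using \<open>a < b\<close> \<open>m > 0\<close> by simp
  then have "measure_pmf.prob (keys_pmf m q) ?large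
      \<le> exp (-2 * \<epsilon>\<^sup>2 / (real m * (b - a)\<^sup>2))"
    using Hoeffding_ineq_ge[OF \<open>\<epsilon> \<ge> 0\<close>] by simp
  moreover have "measure_pmf.prob (keys_pmf m q) (- ?large)
      = 1 - measure_pmf.prob (keys_pmf m q) ?large"
    by (simp add: measure_pmf.prob_compl[symmetric] Compl_eq_Diff_UNIV)
  moreover have "- ?large = {x. (\<Sum>j<m. f (x j)) < real m * measure_pmf.expectation q f + \<epsilon>}"
    by auto
  ultimately show ?thesis
    by simp
qed

lemma one_plus_sqrt_5_le_sqrt_factor:
  fixes s L :: real
  assumes "s \<ge> 0" and "L > 0"
  shows "1 + sqrt 5 * s / sqrt L \<le> sqrt (1 + (3 + 6 * s) / sqrt L + 5 * s\<^sup>2 / L)"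
proof (rule real_le_rsqrt)
  have "sqrt 5 \<le> 3"
    by (rule real_le_lsqrt) auto
  then have "2 * sqrt 5 * s \<le> 3 + 6 * s"
    using mult_right_mono[of "sqrt 5" 3 s] \<open>s \<ge> 0\<close> by linarith
  then have "2 * sqrt 5 * s / sqrt L \<le> (3 + 6 * s) / sqrt L"
    using \<open>L > 0\<close> by (simp add: divide_right_mono)
  moreover have "(1 + sqrt 5 * s / sqrt L)\<^sup>2 = 1 + 2 * sqrt 5 * s / sqrt L + 5 * s\<^sup>2 / L"
    using \<open>L > 0\<close> by (simp add: power2_eq_square field_simps)
  ultimately show "(1 + sqrt 5 * s / sqrt L)\<^sup>2 \<le> 1 + (3 + 6 * s) / sqrt L + 5 * s\<^sup>2 / L"
    by linarith
qed

lemma mean_plus_deviation_le: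
  fixes s L B P \<mu> :: real
  assumes m_def: "real m = L * real n" and "L > 0" and "s \<ge> 0" and "B \<ge> 0"
    and P_ge: "1 \<le> sqrt (real n) * P" and \<mu>_le: "\<mu> \<le> B * P"
  shows "real m * \<mu> + sqrt 5 * s * B * sqrt (real m)
         \<le> L * real n * B * P * sqrt (1 + (3 + 6 * s) / sqrt L + 5 * s\<^sup>2 / L)"
proof -
  have "0 < sqrt (real n) * P"
    using P_ge by linarith
  then have P_nonneg: "P \<ge> 0"
    by (simp add: zero_less_mult_iff)
  have "sqrt (real m) = sqrt L * sqrt (real n)"
    by (simp add: m_def real_sqrt_mult)
  also have "\<dots> \<le> sqrt L * sqrt (real n) * (sqrt (real n) * P)"
    using mult_left_mono[OF P_ge, of "sqrt L * sqrt (real n)"] \<open>L > 0\<close> by simp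
  also have "\<dots> = real m * P / sqrt L"
    using \<open>L > 0\<close> by (simp add: m_def field_simps real_sqrt_mult)
  finally have sqrt_m_le: "sqrt (real m) \<le> real m * P / sqrt L" .
  have "real m * \<mu> + sqrt 5 * s * B * sqrt (real m)
        \<le> real m * (B * P) + sqrt 5 * s * B * (real m * P / sqrt L)"
    using \<mu>_le sqrt_m_le \<open>s \<ge> 0\<close> \<open>B \<ge> 0\<close> by (intro add_mono mult_left_mono) auto
  also have "\<dots> = real m * B * P * (1 + sqrt 5 * s / sqrt L)"
    by (simp add: field_simps)
  also have "\<dots> \<le> real m * B * P * sqrt (1 + (3 + 6 * s) / sqrt L + 5 * s\<^sup>2 / L)"
    using one_plus_sqrt_5_le_sqrt_factor[OF \<open>s \<ge> 0\<close> \<open>L > 0\<close>] \<open>B \<ge> 0\<close> P_nonneg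
    by (intro mult_left_mono) auto
  finally show ?thesis
    by (simp add: m_def)
qed

lemma prob_weighted_chain_len_lt:
  fixes q :: "'u pmf" and s L :: real
  assumes h_range: "\<And>u. h u \<in> {1..n}"
    and m_def: "real m = L * real n" and "L > 0" and "s \<ge> 0"
    and v_nonneg: "\<And>i. i \<in> {1..n} \<Longrightarrow> v i \<ge> 0"
    and v_sum: "(\<Sum>i\<in>{1..n}. v i) = 1"
  shows "measure_pmf.prob (keys_pmf m q)
           {x. (\<Sum>i\<in>{1..n}. v i * real (chain_len h m x i))
                 < L * real n * vnorm n v * vnorm n (slot_prob q h)
                   * sqrt (1 + (3 + 6 * s) / sqrt L + 5 * s\<^sup>2 / L)}
         \<ge> 1 - exp (- (10 * s\<^sup>2))"
proof -
  define B where "B = vnorm n v"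
  define P where "P = vnorm n (slot_prob q h)"
  define g where "g = (\<lambda>u. v (h u))"
  define \<epsilon> where "\<epsilon> = sqrt 5 * s * B * sqrt (real m)"
  have "0 < sqrt (real n) * B"
    using sum_le_sqrt_card_mult_vnorm[where n = n and w = v] v_sum by (simp add: B_def)
  then have B_pos: "B > 0"
    by (simp add: zero_less_mult_iff)
  have g_range: "g u \<in> {0..B}" for u
    using v_nonneg[OF h_range] component_le_vnorm[OF h_range] by (simp add: g_def B_def)
  have P_ge: "1 \<le> sqrt (real n) * P"
    using sum_le_sqrt_card_mult_vnorm[where n = n and w = "slot_prob q h"]
      sum_slot_prob[where h = h and q = q, OF h_range]
    by (simp add: P_def)
  have E_le: "measure_pmf.expectation q g \<le> B * P"
    using expectation_comp_eq_sum_slot_prob[where h = h and f = v and q = q, OF h_range]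
      sum_mult_le_vnorm_mult[where n = n and w = v and z = "slot_prob q h"]
    by (simp add: g_def B_def P_def)
  have "n > 0"
    using h_range[of undefined] by simp
  then have "real m > 0"
    using m_def \<open>L > 0\<close> by simp
  then have m_pos: "m > 0"
    by simp
  have "1 - exp (- (10 * s\<^sup>2)) = 1 - exp (-2 * \<epsilon>\<^sup>2 / (real m * (B - 0)\<^sup>2))"
    using B_pos m_pos by (simp add: \<epsilon>_def power_mult_distrib)
  also have "\<dots> \<le> measure_pmf.prob (keys_pmf m q)
      {x. (\<Sum>j<m. g (x j)) < real m * measure_pmf.expectation q g + \<epsilon>}"
    using \<open>s \<ge> 0\<close> B_pos
    by (intro keys_pmf_Hoeffding_lt[OF g_range B_pos m_pos]) (simp add: \<epsilon>_def)
  also have "\<dots> \<le> measure_pmf.prob (keys_pmf m q)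
      {x. (\<Sum>j<m. g (x j))
            < L * real n * B * P * sqrt (1 + (3 + 6 * s) / sqrt L + 5 * s\<^sup>2 / L)}"
    using mean_plus_deviation_le[OF m_def \<open>L > 0\<close> \<open>s \<ge> 0\<close> _ P_ge E_le] B_pos
    by (intro measure_pmf.finite_measure_mono) (auto simp: \<epsilon>_def)
  finally show ?thesis
    unfolding sum_chain_len_weighted[where h = h and w = v and m = m, OF h_range]
    by (simp add: g_def B_def P_def)
qed

theorem corollary4:
  fixes q :: "'u::finite pmf"
    and h :: "'u \<Rightarrow> nat"
    and n m :: nat
    and s L :: real
    and v :: "nat \<Rightarrow> real"
    and AST :: "(nat \<Rightarrow> real) \<Rightarrow> (nat \<Rightarrow> 'u) \<Rightarrow> real"
  assumes h_range: "\<And>u. h u \<in> {1..n}"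
    and n_gt: "n > 24" and s_pos: "s > 0" and L_gt: "L > 9"
    and m_def: "real m = L * real n"
    and v_nonneg: "\<And>i. i \<in> {1..n} \<Longrightarrow> v i \<ge> 0"
    and v_sum: "(\<Sum>i\<in>{1..n}. v i) = 1"
    and AST_bound: "\<And>x. AST v x \<le> (\<Sum>i\<in>{1..n}. v i * real (chain_len h m x i))"
  shows "measure_pmf.prob (keys_pmf m q)
           {x. AST v x \<le> L * real n * vnorm n v * vnorm n (slot_prob q h)
                 * sqrt (1 + (3 + 6 * s) / sqrt L + 5 * s^2 / L) + 1}
         \<ge> 1 - 10 / 9 * exp (- (s^2) / 4)"
proof -
  have "exp (- (10 * s\<^sup>2)) \<le> exp (- (s^2) / 4)"
    by simp
  then have "1 - 10 / 9 * exp (- (s^2) / 4) \<le> 1 - exp (- (10 * s\<^sup>2))"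
    using exp_gt_zero[of "- (s^2) / 4"] by linarith
  also have "\<dots> \<le> measure_pmf.prob (keys_pmf m q)
           {x. (\<Sum>i\<in>{1..n}. v i * real (chain_len h m x i))
                 < L * real n * vnorm n v * vnorm n (slot_prob q h)
                   * sqrt (1 + (3 + 6 * s) / sqrt L + 5 * s\<^sup>2 / L)}"
    using L_gt s_pos
    by (intro prob_weighted_chain_len_lt[OF h_range m_def _ _ v_nonneg v_sum]) auto
  also have "\<dots> \<le> measure_pmf.prob (keys_pmf m q)
           {x. AST v x \<le> L * real n * vnorm n v * vnorm n (slot_prob q h)
                 * sqrt (1 + (3 + 6 * s) / sqrt L + 5 * s^2 / L) + 1}"
    using order_trans[OF AST_bound less_imp_le]
    by (intro measure_pmf.finite_measure_mono) auto
  finally show ?thesis .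
qed

end
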